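(* Let $p\in J$. The value of the linear program (LP): maximize $\pi_1(\Omega)$ over pairs $(\pi_1,\pi_2)\in\mathrm{cone}(\mathcal{E})\times\mathrm{cone}(\Omega^-)$ with $\pi_1+\pi_2=p$, equals the value of the program (LP'): maximize $\pi(\Omega)$ over $\pi\in\mathrm{cone}(\Omega)$ with $\pi\le p$ (coordinatewise) and $\sum_{\omega\in\Omega}\pi(\omega)r(\omega)\ge0$.
   Context: $\Omega$ is a finite set, $r:\Omega\to\mathbb{R}$; each $\omega$ is identified with a unit vector of $\mathbb{R}^\Omega$ and $\Delta(\Omega)$ with the unit simplex. $J=\{p\in\Delta(\Omega):\sum_\omega p(\omega)r(\omega)<0\}$, $\mathcal{F}=\{p\in\Delta(\Omega):\sum_\omega p(\omega)r(\omega)=0\}$, $\mathcal{E}$ is the set of extreme points of $\mathcal{F}$, $\Omega^-=\{\omega:r(\omega)<0\}$. For a finite set $A\subset\mathbb{R}^\Omega$, $\mathrm{cone}(A)$ is the closed convex hull of $A\cup\{0\}$; for $\pi\in\mathbb{R}^\Omega$, $\pi(\Omega)=\sum_\omega\pi(\omega)$. *)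

theory Defs
  imports "HOL-Analysis.Analysis"
begin

text \<open>Omega is the finite index type 'n; R^Omega is real^'n; the state w is the unit vector axis w 1.\<close>

definition total :: "real^'n \<Rightarrow> real" where
  "total \<pi> = (\<Sum>w\<in>UNIV. \<pi> $ w)"

definition expect :: "('n \<Rightarrow> real) \<Rightarrow> real^'n \<Rightarrow> real" where
  "expect r p = (\<Sum>w\<in>UNIV. p $ w * r w)"

definition prob_simplex :: "(real^'n) set" where
  "prob_simplex = {p. (\<forall>w. 0 \<le> p $ w) \<and> total p = 1}"

definition Jset :: "('n \<Rightarrow> real) \<Rightarrow> (real^'n) set" where
  "Jset r = {p \<in> prob_simplex. expect r p < 0}"

definition Fset :: "('n \<Rightarrow> real) \<Rightarrow> (real^'n) set" where
  "Fset r = {p \<in> prob_simplex. expect r p = 0}"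

definition Eset :: "('n \<Rightarrow> real) \<Rightarrow> (real^'n) set" where
  "Eset r = {x. x extreme_point_of (Fset r)}"

definition Omega_minus :: "('n \<Rightarrow> real) \<Rightarrow> (real^'n) set" where
  "Omega_minus r = {axis w 1 | w. r w < 0}"

definition pcone :: "(real^'n) set \<Rightarrow> (real^'n) set" where
  "pcone A = closure (convex hull (insert 0 A))"

end

theory Submission
  imports Defs
begin

(* Both cones are explicit polytopes: cone(Omega^-) consists of the sub-probability vectors
   supported on Omega^-, and, since F is the convex hull of E (Krein-Milman), cone(E) consists
   of the sub-probability vectors of zero expectation. So every pi1 feasible for (LP) is feasible
   for (LP'). Conversely, given pi feasible for (LP'), raise the coordinates with r >= 0 up to p
   and then move towards p until the expectation vanishes, which happens on the way because p has
   negative expectation. The resulting pi' dominates pi, lies in cone(E), and p - pi' lies in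
   cone(Omega^-). *)

lemma total_inner: "total (x::real^'n::finite) = (\<chi> w. 1) \<bullet> x"
  by (simp add: total_def inner_vec_def)

lemma expect_inner: "expect r (x::real^'n::finite) = (\<chi> w. r w) \<bullet> x"
  by (simp add: expect_def inner_vec_def mult.commute)

lemma total_mono:
  fixes x y :: "real^'n::finite"
  shows "(\<And>w. x $ w \<le> y $ w) \<Longrightarrow> total x \<le> total y"
  unfolding total_def by (rule sum_mono)

lemma total_nonneg_eq_0_iff:
  fixes x :: "real^'n::finite"
  shows "(\<And>w. 0 \<le> x $ w) \<Longrightarrow> total x = 0 \<longleftrightarrow> x = 0"
  by (simp add: total_def sum_nonneg_eq_0_iff vec_eq_iff)

lemma cSup_eq_cSup_of_dominated:
  fixes A B :: "'a::conditionally_complete_lattice set"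
  assumes "A \<subseteq> B" "B \<noteq> {}" "bdd_above B" "\<And>b. b \<in> B \<Longrightarrow> \<exists>a\<in>A. b \<le> a"
  shows "Sup A = Sup B"
proof (rule antisym)
  have "A \<noteq> {}" using assms(2,4) by blast
  then show "Sup A \<le> Sup B" by (rule cSup_subset_mono[OF _ assms(3,1)])
  show "Sup B \<le> Sup A" by (rule cSup_mono[OF assms(2) bdd_above_mono[OF assms(3,1)] assms(4)])
qed

lemma convex_hull_subset_pcone: "convex hull (insert 0 A) \<subseteq> pcone A"
  unfolding pcone_def by (rule closure_subset)

lemma pcone_minimal: "insert 0 A \<subseteq> C \<Longrightarrow> closed C \<Longrightarrow> convex C \<Longrightarrow> pcone A \<subseteq> C"
  unfolding pcone_def by (intro closure_minimal hull_minimal)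

lemma zero_mem_pcone: "0 \<in> pcone A"
  using convex_hull_subset_pcone hull_inc[of 0 "insert 0 A"] by blast

lemma scaleR_mem_convex_hull_insert_0:
  assumes "q \<in> convex hull A" "0 \<le> t" "t \<le> 1"
  shows "t *\<^sub>R q \<in> convex hull (insert 0 A)"
proof -
  have "t *\<^sub>R q + (1 - t) *\<^sub>R 0 \<in> convex hull (insert 0 A)"
    using assms hull_mono[of A "insert 0 A"]
    by (intro convexD[OF convex_convex_hull]) (auto simp: hull_inc)
  then show ?thesis by simp
qed

lemma mem_pcone_of_normalized:
  fixes x :: "real^'n::finite"
  assumes "\<And>w. 0 \<le> x $ w" "total x \<le> 1"
    and "0 < total x \<Longrightarrow> (1 / total x) *\<^sub>R x \<in> convex hull A"
  shows "x \<in> pcone A"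
proof (cases "total x = 0")
  case True
  then show ?thesis using assms(1) by (simp add: total_nonneg_eq_0_iff zero_mem_pcone)
next
  case False
  then have pos: "0 < total x"
    using assms(1) by (metis order_le_less sum_nonneg total_def)
  have "total x *\<^sub>R ((1 / total x) *\<^sub>R x) \<in> convex hull (insert 0 A)"
    using assms(2,3) pos by (intro scaleR_mem_convex_hull_insert_0) auto
  then show ?thesis using pos convex_hull_subset_pcone by auto
qed

definition subprob_on :: "'n set \<Rightarrow> (real^'n::finite) set" where
  "subprob_on W = {x. (\<forall>w. 0 \<le> x $ w) \<and> total x \<le> 1 \<and> (\<forall>w. w \<notin> W \<longrightarrow> x $ w = 0)}"

lemma subprob_on_eq_Inter:
  "subprob_on W =
     (\<Inter>w. {x. axis w 1 \<bullet> x \<ge> 0}) \<inter> {x. (\<chi> w. 1) \<bullet> x \<le> 1} \<inter> (\<Inter>w\<in>-W. {x. axis w 1 \<bullet> x = 0})"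
  by (auto simp: subprob_on_def total_inner inner_axis')

lemma closed_subprob_on: "closed (subprob_on W)"
  unfolding subprob_on_eq_Inter
  by (intro closed_Int closed_INT ballI closed_hyperplane closed_halfspace_le closed_halfspace_ge)

lemma convex_subprob_on: "convex (subprob_on W)"
  unfolding subprob_on_eq_Inter
  by (intro convex_Int convex_INT convex_hyperplane convex_halfspace_le convex_halfspace_ge)

lemma compact_subprob_on: "compact (subprob_on W)"
proof -
  have "norm x \<le> 1" if "x \<in> subprob_on W" for x
  proof -
    have "norm x \<le> (\<Sum>w\<in>UNIV. \<bar>x $ w\<bar>)" by (rule norm_le_l1_cart)
    also have "\<dots> = total x" using that by (simp add: subprob_on_def total_def)
    finally show ?thesis using that by (simp add: subprob_on_def)
  qed
  then have "bounded (subprob_on W)" by (auto simp: bounded_iff)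
  then show ?thesis by (simp add: compact_eq_bounded_closed closed_subprob_on)
qed

lemma normalized_mem_convex_hull_axes:
  fixes x :: "real^'n::finite"
  assumes "\<And>w. 0 \<le> x $ w" "\<And>w. w \<notin> W \<Longrightarrow> x $ w = 0" "0 < total x"
  shows "(1 / total x) *\<^sub>R x \<in> convex hull ((\<lambda>w. axis w 1) ` W)"
proof -
  have total_W: "total x = (\<Sum>w\<in>W. x $ w)"
    unfolding total_def by (rule sum.mono_neutral_right) (use assms(2) in auto)
  have "(1 / total x) *\<^sub>R x = (\<Sum>w\<in>W. (x $ w / total x) *\<^sub>R axis w (1::real))"
  proof -
    have "(\<Sum>w\<in>W. x $ w / total x * axis w 1 $ i) = (if i \<in> W then x $ i / total x else 0)" for i
      by (simp add: axis_def if_distrib[of "\<lambda>a. _ * a"] sum.delta cong: if_cong)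
    then show ?thesis using assms(2) by (auto simp: vec_eq_iff)
  qed
  also have "\<dots> \<in> convex hull ((\<lambda>w. axis w 1) ` W)"
  proof (rule convex_sum)
    show "(\<Sum>w\<in>W. x $ w / total x) = 1"
      using assms(3) by (simp add: total_W flip: sum_divide_distrib)
  qed (use assms in \<open>auto simp: hull_inc\<close>)
  finally show ?thesis .
qed

lemma pcone_axes: "pcone ((\<lambda>w. axis w 1) ` W) = subprob_on W"
proof
  show "pcone ((\<lambda>w. axis w 1) ` W) \<subseteq> subprob_on W"
    by (rule pcone_minimal[OF _ closed_subprob_on convex_subprob_on])
       (auto simp: subprob_on_def total_def axis_def)
  show "subprob_on W \<subseteq> pcone ((\<lambda>w. axis w 1) ` W)"
    by (auto simp: subprob_on_def intro!: mem_pcone_of_normalized normalized_mem_convex_hull_axes)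
qed

lemma pcone_Omega_minus: "pcone (Omega_minus r) = subprob_on {w. r w < 0}"
proof -
  have "Omega_minus r = (\<lambda>w. axis w 1) ` {w. r w < 0}" by (auto simp: Omega_minus_def)
  then show ?thesis by (simp add: pcone_axes)
qed

lemma Fset_eq_subprob_on: "Fset r = subprob_on UNIV \<inter> {x. (\<chi> w. 1) \<bullet> x = 1} \<inter> {x. (\<chi> w. r w) \<bullet> x = 0}"
  by (auto simp: Fset_def prob_simplex_def subprob_on_def total_inner expect_inner)

lemma Fset_eq_convex_hull_Eset: "Fset r = convex hull (Eset r)"
proof -
  have "compact (Fset r)"
    unfolding Fset_eq_subprob_on
    by (intro compact_Int_closed compact_subprob_on closed_hyperplane)
  moreover have "convex (Fset r)"
    unfolding Fset_eq_subprob_on by (intro convex_Int convex_subprob_on convex_hyperplane)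
  ultimately show ?thesis unfolding Eset_def by (rule Krein_Milman_Minkowski)
qed

lemma pcone_Eset: "pcone (Eset r) = subprob_on UNIV \<inter> {x. expect r x = 0}"
proof
  have "Eset r \<subseteq> Fset r" by (auto simp: Eset_def extreme_point_of_def)
  then show "pcone (Eset r) \<subseteq> subprob_on UNIV \<inter> {x. expect r x = 0}"
    unfolding expect_inner
    by (intro pcone_minimal closed_Int convex_Int closed_subprob_on convex_subprob_on
        closed_hyperplane convex_hyperplane)
       (auto simp: Fset_eq_subprob_on subprob_on_def total_def)
  show "subprob_on UNIV \<inter> {x. expect r x = 0} \<subseteq> pcone (Eset r)"
  proof
    fix x assume x: "x \<in> subprob_on UNIV \<inter> {x. expect r x = 0}"
    show "x \<in> pcone (Eset r)"
    proof (rule mem_pcone_of_normalized)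
      assume "0 < total x"
      with x have "(1 / total x) *\<^sub>R x \<in> Fset r"
        by (auto simp: Fset_def prob_simplex_def subprob_on_def total_inner expect_inner)
      then show "(1 / total x) *\<^sub>R x \<in> convex hull Eset r"
        by (simp add: Fset_eq_convex_hull_Eset)
    qed (use x in \<open>auto simp: subprob_on_def\<close>)
  qed
qed

lemma exists_expect_zero_between:
  fixes p \<pi> :: "real^'n::finite"
  assumes "expect r p < 0" "0 \<le> expect r \<pi>" "\<And>w. \<pi> $ w \<le> p $ w"
  obtains \<pi>' where "\<And>w. \<pi> $ w \<le> \<pi>' $ w" "\<And>w. \<pi>' $ w \<le> p $ w" "expect r \<pi>' = 0"
    "\<And>w. 0 \<le> r w \<Longrightarrow> \<pi>' $ w = p $ w"
proof -
  define \<sigma> where "\<sigma> = (\<chi> w. if r w < 0 then \<pi> $ w else p $ w)"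
  have \<sigma>_bounds: "\<pi> $ w \<le> \<sigma> $ w" "\<sigma> $ w \<le> p $ w" for w
    using assms(3)[of w] by (auto simp: \<sigma>_def)
  have "expect r \<pi> \<le> expect r \<sigma>"
    unfolding expect_def
    by (rule sum_mono) (use assms(3) in \<open>auto simp: \<sigma>_def intro: mult_right_mono\<close>)
  define l where "l = expect r \<sigma> / (expect r \<sigma> - expect r p)"
  have l: "0 \<le> l" "l \<le> 1"
    using assms(1,2) \<open>expect r \<pi> \<le> expect r \<sigma>\<close> by (auto simp: l_def field_simps)
  define \<pi>' where "\<pi>' = (1 - l) *\<^sub>R \<sigma> + l *\<^sub>R p"
  have \<pi>'_nth: "\<pi>' $ w = \<sigma> $ w + l * (p $ w - \<sigma> $ w)" for w
    by (simp add: \<pi>'_def algebra_simps)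
  show ?thesis
  proof
    show "\<pi> $ w \<le> \<pi>' $ w" for w
      using \<sigma>_bounds[of w] l by (simp add: \<pi>'_nth add_increasing2)
    show "\<pi>' $ w \<le> p $ w" for w
      using \<sigma>_bounds[of w] l mult_left_le_one_le[of "p $ w - \<sigma> $ w" l] by (simp add: \<pi>'_nth)
    have "expect r \<pi>' = (1 - l) * expect r \<sigma> + l * expect r p"
      by (simp add: \<pi>'_def expect_inner inner_add_right)
    then show "expect r \<pi>' = 0"
      using assms(1,2) \<open>expect r \<pi> \<le> expect r \<sigma>\<close> by (simp add: l_def field_simps)
    show "\<pi>' $ w = p $ w" if "0 \<le> r w" for w
      using that by (simp add: \<pi>'_nth \<sigma>_def)
  qed
qed

lemma exists_decomposition_dominating:
  fixes p \<pi> :: "real^'n::finite"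
  assumes "p \<in> Jset r" "\<pi> \<in> subprob_on UNIV" "\<And>w. \<pi> $ w \<le> p $ w" "0 \<le> expect r \<pi>"
  obtains \<pi>' where "\<pi>' \<in> pcone (Eset r)" "p - \<pi>' \<in> pcone (Omega_minus r)" "total \<pi> \<le> total \<pi>'"
proof -
  have p: "total p = 1" "expect r p < 0"
    using assms(1) by (auto simp: Jset_def prob_simplex_def)
  obtain \<pi>' where \<pi>': "\<And>w. \<pi> $ w \<le> \<pi>' $ w" "\<And>w. \<pi>' $ w \<le> p $ w" "expect r \<pi>' = 0"
    "\<And>w. 0 \<le> r w \<Longrightarrow> \<pi>' $ w = p $ w"
    using exists_expect_zero_between[OF p(2) assms(4,3)] by blast
  have \<pi>'_nonneg: "0 \<le> \<pi>' $ w" for w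
    using assms(2) \<pi>'(1)[of w] by (auto simp: subprob_on_def intro: order_trans)
  show ?thesis
  proof
    show "\<pi>' \<in> pcone (Eset r)"
      using \<pi>'_nonneg total_mono[OF \<pi>'(2)] p(1) \<pi>'(3) by (simp add: pcone_Eset subprob_on_def)
    have "total (p - \<pi>') \<le> total p"
      using \<pi>'_nonneg by (intro total_mono) simp
    then show "p - \<pi>' \<in> pcone (Omega_minus r)"
      using \<pi>'(2,4) p(1) by (auto simp: pcone_Omega_minus subprob_on_def not_less)
    show "total \<pi> \<le> total \<pi>'" using \<pi>'(1) by (rule total_mono)
  qed
qed

theorem lemma2:
  fixes r :: "'n::finite \<Rightarrow> real" and p :: "real^'n"
  assumes "p \<in> Jset r"
  shows "Sup {total \<pi>1 | \<pi>1 \<pi>2. \<pi>1 \<in> pcone (Eset r) \<and> \<pi>2 \<in> pcone (Omega_minus r) \<and> \<pi>1 + \<pi>2 = p}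
       = Sup {total \<pi> | \<pi>. \<pi> \<in> pcone (range (\<lambda>w. axis w 1)) \<and> (\<forall>w. \<pi> $ w \<le> p $ w) \<and> expect r \<pi> \<ge> 0}"
  (is "Sup ?LP = Sup ?LP'")
proof (rule cSup_eq_cSup_of_dominated)
  have p: "\<And>w. 0 \<le> p $ w" "total p = 1"
    using assms by (auto simp: Jset_def prob_simplex_def)
  show "?LP \<subseteq> ?LP'"
    by (fastforce simp: pcone_axes pcone_Eset pcone_Omega_minus subprob_on_def)
  have "total (0::real^'n) \<in> ?LP'"
    using p(1) by (intro CollectI exI[of _ 0]) (simp add: zero_mem_pcone expect_def)
  then show "?LP' \<noteq> {}" by blast
  show "bdd_above ?LP'"
    using p(2) total_mono[of _ p] by (intro bdd_aboveI[of _ 1]) auto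
  show "\<exists>a\<in>?LP. b \<le> a" if "b \<in> ?LP'" for b
  proof -
    obtain \<pi> where \<pi>: "b = total \<pi>" "\<pi> \<in> subprob_on UNIV" "\<And>w. \<pi> $ w \<le> p $ w" "0 \<le> expect r \<pi>"
      using \<open>b \<in> ?LP'\<close> by (auto simp: pcone_axes)
    obtain \<pi>' where "\<pi>' \<in> pcone (Eset r)" "p - \<pi>' \<in> pcone (Omega_minus r)" "total \<pi> \<le> total \<pi>'"
      using exists_decomposition_dominating[OF assms \<pi>(2-4)] .
    then show ?thesis using \<pi>(1) by force
  qed
qed

end
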